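(* Let $G$ be a 2-connected subcubic graph and $e=uv\in E(G)$ such that $G-e$ is simple and 2-connected, and let $G_u$ be the graph obtained from $G-e$ by deleting $u$ and adding a new edge $f_u$ joining the two neighbours of $u$ other than $v$. Then $\widehat\delta(G,e)=\min\{\delta(G_u,f_u)+2,\ \widehat\delta(G_u,f_u)+1\}$.
   Context: Graphs may have loops and parallel edges unless called simple; a graph is subcubic if every vertex has degree at most 3. $n(G)$ is the number of vertices of $G$ and $n_2(G)$ the number of vertices of degree 2. A cycle is a connected 2-regular subgraph (a pair of parallel edges forms a cycle). An even cover of $G$ is a spanning subgraph $F$ in which every vertex has degree 0 or 2; its excess is $\mathrm{exc}(F)=2c(F)+i(F)$, where $c(F)$ is the number of cycles and $i(F)$ the number of isolated vertices of $F$. For $e\in E(G)$, let $\mathcal E(G,e)$ (resp. $\widehat{\mathcal E}(G,e)$) be the set of even covers of $G$ containing (resp. not containing) $e$, and define $\mathrm{exc}(G,e)=\min_{F\in\mathcal E(G,e)}\mathrm{exc}(F)-2$, $\widehat{\mathrm{exc}}(G,e)=\min_{F\in\widehat{\mathcal E}(G,e)}\mathrm{exc}(F)$, $\delta(G,e)=\mathrm{exc}(G,e)-\frac{n(G)+n_2(G)}4$, $\widehat\delta(G,e)=\widehat{\mathrm{exc}}(G,e)-\frac{n(G)+n_2(G)}4$. *)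

theory Defs
  imports Main "HOL-Library.Extended_Real"
begin

text \<open>A (multi)graph is a triple (V, E, ends): a vertex set V, an edge set E, and an
  incidence map ends assigning to each edge its set of endpoints (one endpoint = loop,
  two endpoints = ordinary edge). Distinct edges may have the same ends (parallel edges).\<close>

definition wf_graph :: "'v set \<Rightarrow> 'e set \<Rightarrow> ('e \<Rightarrow> 'v set) \<Rightarrow> bool" where
  "wf_graph V E ends \<longleftrightarrow> finite V \<and> finite E \<and>
     (\<forall>e\<in>E. ends e \<subseteq> V \<and> (card (ends e) = 1 \<or> card (ends e) = 2))"

text \<open>Degree of x with respect to the edge set F (loops count twice).\<close>
definition deg :: "('e \<Rightarrow> 'v set) \<Rightarrow> 'e set \<Rightarrow> 'v \<Rightarrow> nat" where
  "deg ends F x = card {e\<in>F. x \<in> ends e} + card {e\<in>F. ends e = {x}}"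

definition subcubic :: "'v set \<Rightarrow> 'e set \<Rightarrow> ('e \<Rightarrow> 'v set) \<Rightarrow> bool" where
  "subcubic V E ends \<longleftrightarrow> (\<forall>x\<in>V. deg ends E x \<le> 3)"

definition simple_graph :: "'v set \<Rightarrow> 'e set \<Rightarrow> ('e \<Rightarrow> 'v set) \<Rightarrow> bool" where
  "simple_graph V E ends \<longleftrightarrow> (\<forall>e\<in>E. card (ends e) = 2) \<and> inj_on ends E"

definition adj :: "('e \<Rightarrow> 'v set) \<Rightarrow> 'e set \<Rightarrow> 'v \<Rightarrow> 'v \<Rightarrow> bool" where
  "adj ends F a b \<longleftrightarrow> (\<exists>e\<in>F. a \<in> ends e \<and> b \<in> ends e \<and> a \<noteq> b)"

definition connected_graph :: "'v set \<Rightarrow> 'e set \<Rightarrow> ('e \<Rightarrow> 'v set) \<Rightarrow> bool" where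
  "connected_graph V E ends \<longleftrightarrow> V \<noteq> {} \<and> (\<forall>x\<in>V. \<forall>y\<in>V. (adj ends E)\<^sup>*\<^sup>* x y)"

definition two_connected :: "'v set \<Rightarrow> 'e set \<Rightarrow> ('e \<Rightarrow> 'v set) \<Rightarrow> bool" where
  "two_connected V E ends \<longleftrightarrow> 3 \<le> card V \<and> connected_graph V E ends \<and>
     (\<forall>x\<in>V. connected_graph (V - {x}) {e\<in>E. x \<notin> ends e} ends)"

definition n2 :: "'v set \<Rightarrow> 'e set \<Rightarrow> ('e \<Rightarrow> 'v set) \<Rightarrow> nat" where
  "n2 V E ends = card {x\<in>V. deg ends E x = 2}"

definition even_cover :: "'v set \<Rightarrow> 'e set \<Rightarrow> ('e \<Rightarrow> 'v set) \<Rightarrow> 'e set \<Rightarrow> bool" where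
  "even_cover V E ends F \<longleftrightarrow> F \<subseteq> E \<and> (\<forall>x\<in>V. deg ends F x = 0 \<or> deg ends F x = 2)"

text \<open>Number of cycles of F: components of (V,F) containing an edge.\<close>
definition num_cycles :: "'v set \<Rightarrow> ('e \<Rightarrow> 'v set) \<Rightarrow> 'e set \<Rightarrow> nat" where
  "num_cycles V ends F =
     card {{y\<in>V. (adj ends F)\<^sup>*\<^sup>* x y} | x. x \<in> V \<and> deg ends F x \<noteq> 0}"

definition num_isolated :: "'v set \<Rightarrow> ('e \<Rightarrow> 'v set) \<Rightarrow> 'e set \<Rightarrow> nat" where
  "num_isolated V ends F = card {x\<in>V. deg ends F x = 0}"

definition exc :: "'v set \<Rightarrow> ('e \<Rightarrow> 'v set) \<Rightarrow> 'e set \<Rightarrow> nat" where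
  "exc V ends F = 2 * num_cycles V ends F + num_isolated V ends F"

text \<open>Minima over possibly empty sets are taken in the extended reals (empty min = \<infinity>).\<close>
definition exc_in :: "'v set \<Rightarrow> 'e set \<Rightarrow> ('e \<Rightarrow> 'v set) \<Rightarrow> 'e \<Rightarrow> ereal" where
  "exc_in V E ends e =
     (INF F \<in> {F. even_cover V E ends F \<and> e \<in> F}. ereal (real (exc V ends F))) - 2"

definition exc_out :: "'v set \<Rightarrow> 'e set \<Rightarrow> ('e \<Rightarrow> 'v set) \<Rightarrow> 'e \<Rightarrow> ereal" where
  "exc_out V E ends e =
     (INF F \<in> {F. even_cover V E ends F \<and> e \<notin> F}. ereal (real (exc V ends F)))"

definition delta :: "'v set \<Rightarrow> 'e set \<Rightarrow> ('e \<Rightarrow> 'v set) \<Rightarrow> 'e \<Rightarrow> ereal" where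
  "delta V E ends e = exc_in V E ends e - ereal ((real (card V) + real (n2 V E ends)) / 4)"

definition delta_hat :: "'v set \<Rightarrow> 'e set \<Rightarrow> ('e \<Rightarrow> 'v set) \<Rightarrow> 'e \<Rightarrow> ereal" where
  "delta_hat V E ends e = exc_out V E ends e - ereal ((real (card V) + real (n2 V E ends)) / 4)"

text \<open>The graph G_u: from G - e delete u and add a new edge f (a label not in E) joining
  the neighbours of u in G - e.\<close>
definition nbrs_minus :: "'e set \<Rightarrow> ('e \<Rightarrow> 'v set) \<Rightarrow> 'e \<Rightarrow> 'v \<Rightarrow> 'v set" where
  "nbrs_minus E ends e u = {w. \<exists>e'\<in>E - {e}. u \<in> ends e' \<and> w \<in> ends e' \<and> w \<noteq> u}"

definition Gu_V :: "'v set \<Rightarrow> 'v \<Rightarrow> 'v set" where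
  "Gu_V V u = V - {u}"

definition Gu_E :: "'e set \<Rightarrow> ('e \<Rightarrow> 'v set) \<Rightarrow> 'v \<Rightarrow> 'e \<Rightarrow> 'e set" where
  "Gu_E E ends u f = {e'\<in>E. u \<notin> ends e'} \<union> {f}"

definition Gu_ends :: "'e set \<Rightarrow> ('e \<Rightarrow> 'v set) \<Rightarrow> 'e \<Rightarrow> 'v \<Rightarrow> 'e \<Rightarrow> ('e \<Rightarrow> 'v set)" where
  "Gu_ends E ends e u f = ends(f := nbrs_minus E ends e u)"

end

theory Submission
  imports Defs
begin

text \<open>The even covers of G avoiding e are the even covers of G - e, in which u has degree 2 with
  neighbours a and b, and G_u arises by suppressing u. Such a cover either misses both edges at u,
  and is then an even cover of G_u avoiding f plus the isolated vertex u, or it uses both, and is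
  then the subdivision of an even cover of G_u through f with the same cycles and isolated
  vertices. Finally n + n_2 is the same for G and G_u: u disappears while v drops from degree 3
  to degree 2.\<close>

lemma deg_loopless:
  assumes "\<And>y. y \<in> F \<Longrightarrow> card (ends y) = 2"
  shows "deg ends F x = card {y\<in>F. x \<in> ends y}"
proof -
  have no_loops: "{y\<in>F. ends y = {x}} = {}" using assms by fastforce
  show ?thesis unfolding deg_def no_loops by simp
qed

lemma deg_remove_edge:
  assumes "finite E" "e \<in> E" "card (ends e) = 2"
  shows "deg ends E x = deg ends (E - {e}) x + (if x \<in> ends e then 1 else 0)"
proof -
  have "{y\<in>E. x \<in> ends y} = {y\<in>E - {e}. x \<in> ends y} \<union> (if x \<in> ends e then {e} else {})"
    using assms(2) by auto
  moreover have "{y\<in>E. ends y = {x}} = {y\<in>E - {e}. ends y = {x}}"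
    using assms(3) by auto
  ultimately show ?thesis
    unfolding deg_def using assms(1) by (simp add: card_insert_if)
qed

lemma deg_cong:
  assumes "\<And>y. y \<in> F \<Longrightarrow> ends y = ends' y"
  shows "deg ends F = deg ends' F"
  unfolding deg_def using assms by (intro ext) (metis (no_types, lifting) Collect_cong)

lemma n2_remove_edge:
  assumes "finite V" "finite E" "e \<in> E" "ends e = {u, v}" "u \<noteq> v" "u \<in> V" "v \<in> V"
    and "deg ends E u = 3" "deg ends E v = 3"
  shows "n2 V (E - {e}) ends = n2 V E ends + 2"
proof -
  have "deg ends E x = deg ends (E - {e}) x + (if x \<in> {u, v} then 1 else 0)" for x
    using deg_remove_edge[of E e ends x] assms(2-5) by simp
  then have "{x\<in>V. deg ends (E - {e}) x = 2} = {u, v} \<union> {x\<in>V. deg ends E x = 2}"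
    using assms(6-9) by (auto split: if_splits)
  moreover have "{u, v} \<inter> {x\<in>V. deg ends E x = 2} = {}" using assms(8,9) by auto
  ultimately show ?thesis
    unfolding n2_def using assms(1,5) by (simp add: card_Un_disjoint)
qed

lemma even_cover_remove_edge:
  "(even_cover V E ends F \<and> e \<notin> F) \<longleftrightarrow> even_cover V (E - {e}) ends F"
  unfolding even_cover_def by blast

lemma exc_cong:
  assumes "\<And>y. y \<in> F \<Longrightarrow> ends y = ends' y"
  shows "exc V ends F = exc V ends' F"
proof -
  have "adj ends F = adj ends' F"
    unfolding adj_def using assms by (intro ext) auto
  moreover have "deg ends F = deg ends' F" using deg_cong[OF assms] .
  ultimately show ?thesis
    unfolding exc_def num_cycles_def num_isolated_def by simp
qed

lemma rtranclp_no_predecessor: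
  assumes "R\<^sup>*\<^sup>* x u" "\<And>z. \<not> R z u"
  shows "x = u"
  using assms(1) by (cases rule: rtranclp.cases) (use assms(2) in auto)

lemma exc_remove_untouched_vertex:
  assumes "finite V" "u \<in> V" "\<And>y. y \<in> F \<Longrightarrow> u \<notin> ends y"
  shows "exc V ends F = exc (V - {u}) ends F + 1"
proof -
  have untouched: "{y\<in>F. u \<in> ends y} = {}" "{y\<in>F. ends y = {u}} = {}" using assms(3) by auto
  have deg_u: "deg ends F u = 0" unfolding deg_def untouched by simp
  have no_adj: "\<not> adj ends F z u" for z using assms(3) unfolding adj_def by auto
  have "{x\<in>V. deg ends F x = 0} = insert u {x\<in>V - {u}. deg ends F x = 0}"
    using deg_u assms(2) by auto
  then have isolated: "num_isolated V ends F = num_isolated (V - {u}) ends F + 1"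
    unfolding num_isolated_def using assms(1) by simp
  have "{y\<in>V. (adj ends F)\<^sup>*\<^sup>* x y} = {y\<in>V - {u}. (adj ends F)\<^sup>*\<^sup>* x y}" if "x \<noteq> u" for x
    using rtranclp_no_predecessor[of "adj ends F" x u, OF _ no_adj] that by auto
  then have "num_cycles V ends F = num_cycles (V - {u}) ends F"
    unfolding num_cycles_def using deg_u by (metis (no_types, lifting) DiffD1 DiffI singletonD)
  with isolated show ?thesis unfolding exc_def by simp
qed

lemma two_connected_two_neighbours:
  assumes "two_connected V E ends" "x \<in> V" "\<And>e. e \<in> E \<Longrightarrow> ends e \<subseteq> V"
  obtains a b where "a \<noteq> b" "adj ends E x a" "adj ends E x b"
proof -
  from assms(1) have card_V: "3 \<le> card V" and conn: "connected_graph V E ends"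
    and conn_minus: "\<forall>z\<in>V. connected_graph (V - {z}) {e\<in>E. z \<notin> ends e} ends"
    unfolding two_connected_def by auto
  have "finite V" using card_V card.infinite by fastforce
  have "card (V - {x}) \<ge> 2" using card_V \<open>finite V\<close> assms(2) by simp
  then have "V - {x} \<noteq> {}" by (metis card.empty not_numeral_le_zero)
  then obtain y where y: "y \<in> V" "y \<noteq> x" by blast
  have "(adj ends E)\<^sup>*\<^sup>* x y" using conn y assms(2) unfolding connected_graph_def by auto
  then obtain a where a: "adj ends E x a" using y(2) by (metis converse_rtranclpE)
  then have "a \<noteq> x" "a \<in> V" using assms(3) unfolding adj_def by auto
  have "card V - card {x, a} \<le> card (V - {x, a})" by (rule diff_card_le_card_Diff) simp
  moreover have "card {x, a} \<le> 2" by (cases "x = a") auto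
  ultimately have "card (V - {x, a}) \<ge> 1" using card_V by linarith
  then have "V - {x, a} \<noteq> {}" by (metis card.empty not_one_le_zero)
  then obtain z where z: "z \<in> V" "z \<noteq> x" "z \<noteq> a" by blast
  have "(adj ends {e\<in>E. a \<notin> ends e})\<^sup>*\<^sup>* x z"
    using conn_minus \<open>a \<in> V\<close> \<open>a \<noteq> x\<close> z assms(2) unfolding connected_graph_def by auto
  then obtain b where "adj ends {e\<in>E. a \<notin> ends e} x b" using z(2) by (metis converse_rtranclpE)
  then have "adj ends E x b" "b \<noteq> a" unfolding adj_def by auto
  with a show ?thesis using that by blast
qed

lemma two_connected_two_incident_edges:
  assumes "two_connected V E ends" "x \<in> V"
    "\<And>y. y \<in> E \<Longrightarrow> ends y \<subseteq> V" "\<And>y. y \<in> E \<Longrightarrow> card (ends y) = 2"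
  obtains e1 e2 a b where "e1 \<in> E" "e2 \<in> E" "ends e1 = {x, a}" "ends e2 = {x, b}" "a \<noteq> b"
proof -
  have ends_eq: "ends y = {x, c}" if "y \<in> E" "x \<in> ends y" "c \<in> ends y" "x \<noteq> c" for y c
    using assms(4)[OF that(1)] that(2-4) by (metis card_2_iff doubleton_eq_iff insertE singletonD)
  obtain a b where "a \<noteq> b" "adj ends E x a" "adj ends E x b"
    using two_connected_two_neighbours[OF assms(1-3)] .
  then show ?thesis using that ends_eq unfolding adj_def by metis
qed

lemma deg_endpoint_of_deletable_edge:
  assumes "subcubic V E ends" "two_connected V (E - {e}) ends" "finite E" "e \<in> E" "x \<in> ends e"
    and ends_V: "\<And>y. y \<in> E \<Longrightarrow> ends y \<subseteq> V" and loopless: "\<And>y. y \<in> E \<Longrightarrow> card (ends y) = 2"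
  shows "deg ends E x = 3" "deg ends (E - {e}) x = 2"
proof -
  have "x \<in> V" using ends_V assms(4,5) by auto
  then obtain e1 e2 a b where e12: "e1 \<in> E - {e}" "e2 \<in> E - {e}"
    "ends e1 = {x, a}" "ends e2 = {x, b}" "a \<noteq> b"
    using two_connected_two_incident_edges[OF assms(2)] ends_V loopless by blast
  then have "e1 \<noteq> e2" by (metis doubleton_eq_iff)
  then have "2 \<le> card {y\<in>E - {e}. x \<in> ends y}"
    using e12 assms(3) card_mono[of "{y\<in>E - {e}. x \<in> ends y}" "{e1, e2}"] by auto
  then have "2 \<le> deg ends (E - {e}) x" using deg_loopless[of "E - {e}" ends x] loopless by simp
  moreover have "deg ends E x = deg ends (E - {e}) x + 1"
    using deg_remove_edge[of E e ends x] assms(3-5) loopless by simp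
  moreover have "deg ends E x \<le> 3" using assms(1) \<open>x \<in> V\<close> unfolding subcubic_def by blast
  ultimately show "deg ends E x = 3" "deg ends (E - {e}) x = 2" by linarith+
qed

definition cycle_components :: "'v set \<Rightarrow> ('e \<Rightarrow> 'v set) \<Rightarrow> 'e set \<Rightarrow> 'v set set" where
  "cycle_components V ends F = {{y\<in>V. (adj ends F)\<^sup>*\<^sup>* x y} | x. x \<in> V \<and> deg ends F x \<noteq> 0}"

lemma num_cycles_eq_card_cycle_components:
  "num_cycles V ends F = card (cycle_components V ends F)"
  unfolding num_cycles_def cycle_components_def ..

text \<open>In the application E is the edge set of G - e.\<close>

locale degree_two_suppression =
  fixes V :: "'v set" and E :: "'e set" and ends :: "'e \<Rightarrow> 'v set"
    and u a b :: 'v and e1 e2 f :: 'e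
  assumes finite_V: "finite V" and finite_E: "finite E"
    and loopless: "\<And>y. y \<in> E \<Longrightarrow> card (ends y) = 2"
    and ends_subset: "\<And>y. y \<in> E \<Longrightarrow> ends y \<subseteq> V"
    and edges_at_u: "{y\<in>E. u \<in> ends y} = {e1, e2}"
    and ends_e1: "ends e1 = {u, a}" and ends_e2: "ends e2 = {u, b}"
    and a_ne_b: "a \<noteq> b"
    and f_notin_E: "f \<notin> E"
begin

definition suppressed_E :: "'e set" where
  "suppressed_E = {y\<in>E. u \<notin> ends y} \<union> {f}"

definition suppressed_ends :: "'e \<Rightarrow> 'v set" where
  "suppressed_ends = ends(f := {a, b})"

definition subdivide :: "'e set \<Rightarrow> 'e set" where
  "subdivide F = (F - {f}) \<union> {e1, e2}"

text \<open>Projecting u onto its neighbour a turns walks in a subdivided cover into walks in the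
  suppressed one.\<close>

definition merge_u :: "'v \<Rightarrow> 'v" where
  "merge_u x = (if x = u then a else x)"

lemma e1_in_E: "e1 \<in> E" and e2_in_E: "e2 \<in> E"
  using edges_at_u by auto

lemma e1_ne_e2: "e1 \<noteq> e2"
  using ends_e1 ends_e2 a_ne_b by (metis doubleton_eq_iff)

lemma a_ne_u: "a \<noteq> u" and b_ne_u: "b \<noteq> u"
  using loopless[OF e1_in_E] loopless[OF e2_in_E] ends_e1 ends_e2 by auto

lemma u_in_V: "u \<in> V" and a_in_V: "a \<in> V"
  using ends_subset[OF e1_in_E] ends_e1 by auto

lemma finite_suppressed_E: "finite suppressed_E"
  unfolding suppressed_E_def using finite_E by simp

lemma suppressed_loopless: "y \<in> suppressed_E \<Longrightarrow> card (suppressed_ends y) = 2"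
  unfolding suppressed_E_def suppressed_ends_def using loopless a_ne_b f_notin_E by auto

lemma subdivide_subset: "F \<subseteq> suppressed_E \<Longrightarrow> subdivide F \<subseteq> E"
  unfolding subdivide_def suppressed_E_def using e1_in_E e2_in_E by auto

lemma suppressed_neighbours: "{w. \<exists>y\<in>E. u \<in> ends y \<and> w \<in> ends y \<and> w \<noteq> u} = {a, b}"
  using edges_at_u ends_e1 ends_e2 a_ne_u b_ne_u by auto

lemma deg_subdivide:
  assumes "F \<subseteq> suppressed_E" "f \<in> F" "x \<noteq> u"
  shows "deg ends (subdivide F) x = deg suppressed_ends F x"
proof -
  have "finite F" using assms(1) finite_suppressed_E by (rule finite_subset)
  have e12_notin: "e1 \<notin> F - {f}" "e2 \<notin> F - {f}"
    using assms(1) ends_e1 ends_e2 unfolding suppressed_E_def by auto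
  have "deg ends (subdivide F) x = card {y\<in>subdivide F. x \<in> ends y}"
    using deg_loopless loopless subdivide_subset[OF assms(1)] by (metis subsetD)
  also have "{y\<in>subdivide F. x \<in> ends y} = {y\<in>F - {f}. x \<in> ends y} \<union> {y\<in>{e1, e2}. x \<in> ends y}"
    unfolding subdivide_def by auto
  also have "card \<dots> = card {y\<in>F - {f}. x \<in> ends y} + card {y\<in>{e1, e2}. x \<in> ends y}"
    by (rule card_Un_disjoint) (use \<open>finite F\<close> e12_notin in auto)
  finally have deg_subdivided: "deg ends (subdivide F) x
      = card {y\<in>F - {f}. x \<in> ends y} + card {y\<in>{e1, e2}. x \<in> ends y}" .
  have "deg suppressed_ends F x = card {y\<in>F. x \<in> suppressed_ends y}"
    using deg_loopless suppressed_loopless assms(1) by (metis subsetD)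
  also have "{y\<in>F. x \<in> suppressed_ends y} = {y\<in>F - {f}. x \<in> ends y} \<union> {y\<in>{f}. x \<in> {a, b}}"
    unfolding suppressed_ends_def using assms(2) by auto
  also have "card \<dots> = card {y\<in>F - {f}. x \<in> ends y} + card {y\<in>{f}. x \<in> {a, b}}"
    by (rule card_Un_disjoint) (use \<open>finite F\<close> in auto)
  finally have deg_suppressed: "deg suppressed_ends F x
      = card {y\<in>F - {f}. x \<in> ends y} + card {y\<in>{f}. x \<in> {a, b}}" .
  have "{y\<in>{e1, e2}. x \<in> ends y} = (if x = a then {e1} else if x = b then {e2} else {})"
    using ends_e1 ends_e2 a_ne_b e1_ne_e2 assms(3) by auto
  moreover have "{y\<in>{f}. x \<in> {a, b}} = (if x \<in> {a, b} then {f} else {})" by auto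
  ultimately have "card {y\<in>{e1, e2}. x \<in> ends y} = card {y\<in>{f}. x \<in> {a, b}}" by simp
  with deg_subdivided deg_suppressed show ?thesis by simp
qed

lemma deg_subdivide_u:
  assumes "F \<subseteq> suppressed_E"
  shows "deg ends (subdivide F) u = 2"
proof -
  have "{y\<in>subdivide F. u \<in> ends y} = {e1, e2}"
    using assms ends_e1 ends_e2 unfolding subdivide_def suppressed_E_def by auto
  then show ?thesis
    using deg_loopless[of "subdivide F" ends u] loopless subdivide_subset[OF assms] e1_ne_e2
    by (simp add: subset_iff)
qed

lemma adj_subdivide_u_a: "adj ends (subdivide F) u a" "adj ends (subdivide F) a u"
  unfolding adj_def subdivide_def using ends_e1 a_ne_u by auto

lemma adj_subdivide_imp_suppressed:
  assumes "F \<subseteq> suppressed_E" "f \<in> F" "adj ends (subdivide F) x y"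
  shows "(adj suppressed_ends F)\<^sup>*\<^sup>* (merge_u x) (merge_u y)"
proof -
  from assms(3) obtain z where z: "z \<in> subdivide F" "x \<in> ends z" "y \<in> ends z" "x \<noteq> y"
    unfolding adj_def by blast
  show ?thesis
  proof (cases "z \<in> F - {f}")
    case True
    then have "u \<notin> ends z" "suppressed_ends z = ends z"
      using assms(1) unfolding suppressed_E_def suppressed_ends_def by auto
    then have "adj suppressed_ends F x y" "merge_u x = x" "merge_u y = y"
      using z True unfolding adj_def merge_u_def by auto
    then show ?thesis by auto
  next
    case False
    then have "z = e1 \<or> z = e2" using z(1) unfolding subdivide_def by auto
    moreover have "adj suppressed_ends F a b" "adj suppressed_ends F b a"
      using assms(2) a_ne_b unfolding adj_def suppressed_ends_def by auto
    ultimately show ?thesis using z ends_e1 ends_e2 a_ne_u b_ne_u unfolding merge_u_def by auto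
  qed
qed

lemma adj_suppressed_imp_subdivide:
  assumes "f \<in> F" "adj suppressed_ends F x y"
  shows "(adj ends (subdivide F))\<^sup>*\<^sup>* x y"
proof -
  from assms(2) obtain z where z: "z \<in> F" "x \<in> suppressed_ends z" "y \<in> suppressed_ends z" "x \<noteq> y"
    unfolding adj_def by blast
  show ?thesis
  proof (cases "z = f")
    case True
    have path: "adj ends (subdivide F) a u" "adj ends (subdivide F) u b"
      "adj ends (subdivide F) b u" "adj ends (subdivide F) u a"
      unfolding adj_def subdivide_def using ends_e1 ends_e2 a_ne_u b_ne_u by auto
    have "(x = a \<and> y = b) \<or> (x = b \<and> y = a)"
      using z True unfolding suppressed_ends_def by auto
    then show ?thesis using path by (meson converse_rtranclp_into_rtranclp r_into_rtranclp)
  next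
    case False
    then have "adj ends (subdivide F) x y"
      using z unfolding adj_def subdivide_def suppressed_ends_def by auto
    then show ?thesis by auto
  qed
qed

lemma component_subdivide_minus_u:
  assumes "F \<subseteq> suppressed_E" "f \<in> F"
  shows "{y\<in>V. (adj ends (subdivide F))\<^sup>*\<^sup>* x y} - {u}
       = {y\<in>V - {u}. (adj suppressed_ends F)\<^sup>*\<^sup>* (merge_u x) y}"
proof -
  have reach_merge: "(adj ends (subdivide F))\<^sup>*\<^sup>* x (merge_u x)"
    unfolding merge_u_def using adj_subdivide_u_a by auto
  have "(adj ends (subdivide F))\<^sup>*\<^sup>* x y \<longleftrightarrow> (adj suppressed_ends F)\<^sup>*\<^sup>* (merge_u x) y"
    if "y \<noteq> u" for y
  proof
    assume "(adj ends (subdivide F))\<^sup>*\<^sup>* x y"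
    then have "(adj suppressed_ends F)\<^sup>*\<^sup>* (merge_u x) (merge_u y)"
      by (induction rule: rtranclp_induct)
        (auto intro: rtranclp_trans adj_subdivide_imp_suppressed[OF assms])
    then show "(adj suppressed_ends F)\<^sup>*\<^sup>* (merge_u x) y" using that unfolding merge_u_def by simp
  next
    assume "(adj suppressed_ends F)\<^sup>*\<^sup>* (merge_u x) y"
    then have "(adj ends (subdivide F))\<^sup>*\<^sup>* (merge_u x) y"
      by (induction rule: rtranclp_induct)
        (auto intro: rtranclp_trans adj_suppressed_imp_subdivide[OF assms(2)])
    with reach_merge show "(adj ends (subdivide F))\<^sup>*\<^sup>* x y" by (rule rtranclp_trans)
  qed
  then show ?thesis by auto
qed

lemma cycle_components_suppressed:
  assumes "F \<subseteq> suppressed_E" "f \<in> F"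
  shows "cycle_components (V - {u}) suppressed_ends F
       = (\<lambda>C. C - {u}) ` cycle_components V ends (subdivide F)"
proof -
  have deg_eq: "x \<noteq> u \<Longrightarrow> deg ends (subdivide F) x = deg suppressed_ends F x" for x
    using deg_subdivide[OF assms] .
  have "finite F" using assms(1) finite_suppressed_E by (rule finite_subset)
  then have "f \<in> {y\<in>F. a \<in> suppressed_ends y}" "finite {y\<in>F. a \<in> suppressed_ends y}"
    using assms(2) unfolding suppressed_ends_def by auto
  then have "deg suppressed_ends F a \<noteq> 0" unfolding deg_def by (metis add_is_0 card_0_eq empty_iff)
  then have merge_u_cycle: "merge_u x \<in> V - {u} \<and> deg suppressed_ends F (merge_u x) \<noteq> 0"
    if "x \<in> V" "deg ends (subdivide F) x \<noteq> 0" for x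
    using that a_in_V a_ne_u deg_eq[of x] unfolding merge_u_def by auto
  show ?thesis
  proof
    show "cycle_components (V - {u}) suppressed_ends F
        \<subseteq> (\<lambda>C. C - {u}) ` cycle_components V ends (subdivide F)"
    proof
      fix C assume "C \<in> cycle_components (V - {u}) suppressed_ends F"
      then obtain x where x: "C = {y\<in>V - {u}. (adj suppressed_ends F)\<^sup>*\<^sup>* x y}"
        "x \<in> V - {u}" "deg suppressed_ends F x \<noteq> 0"
        unfolding cycle_components_def by blast
      then have "C = {y\<in>V. (adj ends (subdivide F))\<^sup>*\<^sup>* x y} - {u}"
        using component_subdivide_minus_u[OF assms, of x] by (simp add: merge_u_def)
      moreover have "{y\<in>V. (adj ends (subdivide F))\<^sup>*\<^sup>* x y} \<in> cycle_components V ends (subdivide F)"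
        using x deg_eq unfolding cycle_components_def by auto
      ultimately show "C \<in> (\<lambda>C. C - {u}) ` cycle_components V ends (subdivide F)" by blast
    qed
    show "(\<lambda>C. C - {u}) ` cycle_components V ends (subdivide F)
        \<subseteq> cycle_components (V - {u}) suppressed_ends F"
    proof
      fix C assume "C \<in> (\<lambda>C. C - {u}) ` cycle_components V ends (subdivide F)"
      then obtain x where x: "C = {y\<in>V. (adj ends (subdivide F))\<^sup>*\<^sup>* x y} - {u}"
        "x \<in> V" "deg ends (subdivide F) x \<noteq> 0"
        unfolding cycle_components_def by blast
      then show "C \<in> cycle_components (V - {u}) suppressed_ends F"
        using component_subdivide_minus_u[OF assms, of x] merge_u_cycle[of x]
        unfolding cycle_components_def by blast
    qed
  qed
qed

lemma inj_on_remove_u_cycle_components: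
  "inj_on (\<lambda>C. C - {u}) (cycle_components V ends (subdivide F))"
proof (rule inj_onI)
  let ?R = "adj ends (subdivide F)"
  have u_shared: "u \<in> D2"
    if D12: "D1 \<in> cycle_components V ends (subdivide F)" "D2 \<in> cycle_components V ends (subdivide F)"
      and same_outside_u: "D1 - {u} = D2 - {u}" and "u \<in> D1" for D1 D2
  proof -
    obtain x1 x2 where x12: "D1 = {y\<in>V. ?R\<^sup>*\<^sup>* x1 y}" "D2 = {y\<in>V. ?R\<^sup>*\<^sup>* x2 y}"
      using D12 unfolding cycle_components_def by blast
    have "?R\<^sup>*\<^sup>* x1 a" using \<open>u \<in> D1\<close> x12(1) adj_subdivide_u_a(1) by (auto intro: rtranclp.rtrancl_into_rtrancl)
    then have "a \<in> D2" using same_outside_u x12(1) a_in_V a_ne_u by blast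
    then have "?R\<^sup>*\<^sup>* x2 u" using x12(2) adj_subdivide_u_a(2) by (auto intro: rtranclp.rtrancl_into_rtrancl)
    then show "u \<in> D2" using x12(2) u_in_V by simp
  qed
  fix C1 C2
  assume "C1 \<in> cycle_components V ends (subdivide F)" "C2 \<in> cycle_components V ends (subdivide F)"
    and "C1 - {u} = C2 - {u}"
  then show "C1 = C2" using u_shared[of C1 C2] u_shared[of C2 C1] by blast
qed

lemma exc_subdivide:
  assumes "F \<subseteq> suppressed_E" "f \<in> F"
  shows "exc V ends (subdivide F) = exc (V - {u}) suppressed_ends F"
proof -
  have "num_cycles V ends (subdivide F) = num_cycles (V - {u}) suppressed_ends F"
    unfolding num_cycles_eq_card_cycle_components cycle_components_suppressed[OF assms]
    using card_image[OF inj_on_remove_u_cycle_components] by simp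
  moreover have "{x\<in>V. deg ends (subdivide F) x = 0} = {x\<in>V - {u}. deg suppressed_ends F x = 0}"
    using deg_subdivide[OF assms] deg_subdivide_u[OF assms(1)] by (metis (lifting) Diff_iff
      Collect_cong singletonD singletonI zero_neq_numeral)
  ultimately show ?thesis unfolding exc_def num_isolated_def by simp
qed

lemma even_cover_e1_iff_e2:
  assumes "even_cover V E ends F"
  shows "e1 \<in> F \<longleftrightarrow> e2 \<in> F"
proof -
  have "F \<subseteq> E" using assms unfolding even_cover_def by auto
  have "deg ends F u = card {y\<in>F. u \<in> ends y}"
    by (rule deg_loopless) (use loopless \<open>F \<subseteq> E\<close> in blast)
  also have "{y\<in>F. u \<in> ends y} = {e1, e2} \<inter> F"
    using \<open>F \<subseteq> E\<close> edges_at_u by auto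
  finally have "deg ends F u = card ({e1, e2} \<inter> F)" .
  moreover have "deg ends F u = 0 \<or> deg ends F u = 2"
    using assms u_in_V unfolding even_cover_def by blast
  ultimately show ?thesis using e1_ne_e2 by (cases "e1 \<in> F"; cases "e2 \<in> F") auto
qed

lemma even_covers_avoiding_e1:
  "{F. even_cover V E ends F \<and> e1 \<notin> F} = {F. even_cover (V - {u}) suppressed_E suppressed_ends F \<and> f \<notin> F}"
proof -
  have same_covers: "(even_cover V E ends F \<and> e1 \<notin> F) \<longleftrightarrow> even_cover (V - {u}) suppressed_E suppressed_ends F \<and> f \<notin> F"
    if F_avoids_u: "F \<subseteq> {y\<in>E. u \<notin> ends y}" for F
  proof -
    have untouched: "{y\<in>F. u \<in> ends y} = {}" "{y\<in>F. ends y = {u}} = {}"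
      using F_avoids_u by auto
    have deg_u: "deg ends F u = 0" unfolding deg_def untouched by simp
    have deg_eq: "deg suppressed_ends F = deg ends F"
      by (rule deg_cong) (use F_avoids_u f_notin_E in \<open>auto simp: suppressed_ends_def\<close>)
    have "e1 \<notin> F" "f \<notin> F" "F \<subseteq> E" "F \<subseteq> suppressed_E"
      using F_avoids_u f_notin_E ends_e1 unfolding suppressed_E_def by auto
    then show ?thesis unfolding even_cover_def deg_eq using deg_u by blast
  qed
  have avoids_u: "F \<subseteq> {y\<in>E. u \<notin> ends y}" if "even_cover V E ends F" "e1 \<notin> F" for F
  proof -
    have "e2 \<notin> F" using that even_cover_e1_iff_e2 by blast
    show ?thesis
    proof
      fix y assume "y \<in> F"
      then have "y \<in> E" "y \<noteq> e1" "y \<noteq> e2" using that \<open>e2 \<notin> F\<close> unfolding even_cover_def by auto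
      then show "y \<in> {y\<in>E. u \<notin> ends y}" using edges_at_u by blast
    qed
  qed
  have avoids_u': "F \<subseteq> {y\<in>E. u \<notin> ends y}"
    if "even_cover (V - {u}) suppressed_E suppressed_ends F" "f \<notin> F" for F
    using that unfolding even_cover_def suppressed_E_def by blast
  show ?thesis
  proof (intro Collect_cong iffI)
    fix F assume "even_cover V E ends F \<and> e1 \<notin> F"
    then show "even_cover (V - {u}) suppressed_E suppressed_ends F \<and> f \<notin> F"
      using same_covers avoids_u by blast
  next
    fix F assume "even_cover (V - {u}) suppressed_E suppressed_ends F \<and> f \<notin> F"
    then show "even_cover V E ends F \<and> e1 \<notin> F"
      using same_covers avoids_u' by blast
  qed
qed

lemma exc_avoiding_f:
  assumes "F \<subseteq> suppressed_E" "f \<notin> F"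
  shows "exc V ends F = exc (V - {u}) suppressed_ends F + 1"
proof -
  have "u \<notin> ends y" "ends y = suppressed_ends y" if "y \<in> F" for y
    using assms that unfolding suppressed_E_def suppressed_ends_def by auto
  then show ?thesis
    using exc_remove_untouched_vertex[OF finite_V u_in_V] exc_cong by metis
qed

lemma even_covers_containing_e1:
  "{F. even_cover V E ends F \<and> e1 \<in> F}
     = subdivide ` {F. even_cover (V - {u}) suppressed_E suppressed_ends F \<and> f \<in> F}"
proof
  show "subdivide ` {F. even_cover (V - {u}) suppressed_E suppressed_ends F \<and> f \<in> F}
      \<subseteq> {F. even_cover V E ends F \<and> e1 \<in> F}"
  proof
    fix F' assume "F' \<in> subdivide ` {F. even_cover (V - {u}) suppressed_E suppressed_ends F \<and> f \<in> F}"
    then obtain F where F: "F' = subdivide F" "even_cover (V - {u}) suppressed_E suppressed_ends F" "f \<in> F"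
      by auto
    then have "F \<subseteq> suppressed_E" unfolding even_cover_def by auto
    have "deg ends F' x = 0 \<or> deg ends F' x = 2" if "x \<in> V" for x
      using F that deg_subdivide[OF \<open>F \<subseteq> suppressed_E\<close> \<open>f \<in> F\<close>, of x] deg_subdivide_u[OF \<open>F \<subseteq> suppressed_E\<close>]
      unfolding even_cover_def by (cases "x = u") auto
    moreover have "F' \<subseteq> E" "e1 \<in> F'"
      using F subdivide_subset[OF \<open>F \<subseteq> suppressed_E\<close>] unfolding subdivide_def by auto
    ultimately show "F' \<in> {F. even_cover V E ends F \<and> e1 \<in> F}" unfolding even_cover_def by auto
  qed
  show "{F. even_cover V E ends F \<and> e1 \<in> F}
      \<subseteq> subdivide ` {F. even_cover (V - {u}) suppressed_E suppressed_ends F \<and> f \<in> F}"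
  proof
    fix F' assume "F' \<in> {F. even_cover V E ends F \<and> e1 \<in> F}"
    then have F': "even_cover V E ends F'" "e1 \<in> F'" "e2 \<in> F'" "F' \<subseteq> E"
      using even_cover_e1_iff_e2 unfolding even_cover_def by auto
    define F where "F = (F' - {e1, e2}) \<union> {f}"
    have "F \<subseteq> suppressed_E" "f \<in> F"
      unfolding F_def suppressed_E_def using F'(4) edges_at_u by auto
    moreover have "subdivide F = F'"
      unfolding subdivide_def F_def using F'(2-4) f_notin_E by auto
    moreover have "deg suppressed_ends F x = 0 \<or> deg suppressed_ends F x = 2" if "x \<in> V - {u}" for x
      using deg_subdivide[OF calculation(1,2), of x] that calculation(3) F'(1)
      unfolding even_cover_def by auto
    ultimately show "F' \<in> subdivide ` {F. even_cover (V - {u}) suppressed_E suppressed_ends F \<and> f \<in> F}"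
      unfolding even_cover_def by auto
  qed
qed

lemma INF_exc_even_covers:
  "(INF F\<in>{F. even_cover V E ends F}. ereal (real (exc V ends F)))
     = min (exc_in (V - {u}) suppressed_E suppressed_ends f + 2)
           (exc_out (V - {u}) suppressed_E suppressed_ends f + 1)"
proof -
  let ?exc = "\<lambda>F. ereal (real (exc V ends F))"
  let ?exc' = "\<lambda>F. ereal (real (exc (V - {u}) suppressed_ends F))"
  let ?covers' = "\<lambda>P. {F. even_cover (V - {u}) suppressed_E suppressed_ends F \<and> P F}"
  have ereal_minus_plus_2: "(x::ereal) - 2 + 2 = x" for x by (cases x) simp_all
  have "{F. even_cover V E ends F}
      = {F. even_cover V E ends F \<and> e1 \<in> F} \<union> {F. even_cover V E ends F \<and> e1 \<notin> F}"
    by auto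
  then have "(INF F\<in>{F. even_cover V E ends F}. ?exc F)
      = min (INF F\<in>{F. even_cover V E ends F \<and> e1 \<in> F}. ?exc F)
            (INF F\<in>{F. even_cover V E ends F \<and> e1 \<notin> F}. ?exc F)"
    by (simp add: INF_union inf_min)
  also have "(INF F\<in>{F. even_cover V E ends F \<and> e1 \<in> F}. ?exc F)
      = (INF F\<in>?covers' (\<lambda>F. f \<in> F). ?exc' F)"
    unfolding even_covers_containing_e1 image_image
    by (rule INF_cong) (auto simp: even_cover_def exc_subdivide)
  also have "(INF F\<in>{F. even_cover V E ends F \<and> e1 \<notin> F}. ?exc F)
      = (INF F\<in>?covers' (\<lambda>F. f \<notin> F). ?exc' F + 1)"
    unfolding even_covers_avoiding_e1
    by (rule INF_cong) (auto simp: even_cover_def exc_avoiding_f)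
  also have "\<dots> = (INF F\<in>?covers' (\<lambda>F. f \<notin> F). ?exc' F) + 1"
  proof (cases "?covers' (\<lambda>F. f \<notin> F) = {}")
    case True
    show ?thesis unfolding True by (simp add: top_ereal_def)
  next
    case False
    then show ?thesis by (rule INF_ereal_add_left) auto
  qed
  finally show ?thesis
    unfolding exc_in_def exc_out_def using ereal_minus_plus_2 by simp
qed

lemma subdivide_suppressed_E: "subdivide suppressed_E = E"
  unfolding subdivide_def suppressed_E_def using edges_at_u f_notin_E by auto

lemma n2_suppressed: "n2 (V - {u}) suppressed_E suppressed_ends + 1 = n2 V E ends"
proof -
  have deg_eq: "deg suppressed_ends suppressed_E x = deg ends E x" if "x \<noteq> u" for x
    using deg_subdivide[of suppressed_E x] that subdivide_suppressed_E
    unfolding suppressed_E_def by auto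
  have "deg ends E u = 2"
    using deg_subdivide_u[of suppressed_E] subdivide_suppressed_E by simp
  then have "{x\<in>V. deg ends E x = 2} = insert u {x\<in>V - {u}. deg suppressed_ends suppressed_E x = 2}"
    using u_in_V deg_eq by auto
  then show ?thesis unfolding n2_def using finite_V by simp
qed

end

lemma two_connected_degree_two_suppression:
  assumes "finite V" "finite E" "\<And>y. y \<in> E \<Longrightarrow> ends y \<subseteq> V" "\<And>y. y \<in> E \<Longrightarrow> card (ends y) = 2"
    and "two_connected V E ends" "u \<in> V" "deg ends E u = 2" "f \<notin> E"
  obtains a b e1 e2 where "degree_two_suppression V E ends u a b e1 e2 f"
proof -
  obtain e1 e2 a b where e12: "e1 \<in> E" "e2 \<in> E" "ends e1 = {u, a}" "ends e2 = {u, b}" "a \<noteq> b"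
    using two_connected_two_incident_edges[OF assms(5,6,3,4)] by blast
  then have "e1 \<noteq> e2" by (metis doubleton_eq_iff)
  have "{y\<in>E. u \<in> ends y} = {e1, e2}"
  proof (rule sym, rule card_subset_eq)
    show "card {e1, e2} = card {y\<in>E. u \<in> ends y}"
      using \<open>e1 \<noteq> e2\<close> assms(7) deg_loopless[of E ends u] assms(4) by auto
  qed (use e12 assms(2) in auto)
  then have "degree_two_suppression V E ends u a b e1 e2 f"
    using assms(1-4,8) e12 by unfold_locales auto
  then show ?thesis using that by blast
qed

theorem mainTheorem10:
  fixes V :: "'v set" and E :: "'e set" and ends :: "'e \<Rightarrow> 'v set"
    and e f :: 'e and u v :: 'v
  assumes "wf_graph V E ends"
    and "two_connected V E ends"
    and "subcubic V E ends"
    and "e \<in> E" and "ends e = {u, v}" and "u \<noteq> v"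
    and "simple_graph V (E - {e}) ends"
    and "two_connected V (E - {e}) ends"
    and "f \<notin> E"
  shows "delta_hat V E ends e =
           min (delta (Gu_V V u) (Gu_E E ends u f) (Gu_ends E ends e u f) f + 2)
               (delta_hat (Gu_V V u) (Gu_E E ends u f) (Gu_ends E ends e u f) f + 1)"
proof -
  have finite: "finite V" "finite E" and ends_V: "\<And>y. y \<in> E \<Longrightarrow> ends y \<subseteq> V"
    using assms(1) unfolding wf_graph_def by auto
  have loopless: "\<And>y. y \<in> E \<Longrightarrow> card (ends y) = 2"
    using assms(5-7) unfolding simple_graph_def by (metis Diff_iff card_2_iff singletonD)
  have deg_u: "deg ends E u = 3" "deg ends (E - {e}) u = 2"
   and deg_v: "deg ends E v = 3"
    using deg_endpoint_of_deletable_edge[OF assms(3,8) finite(2) assms(4) _ ends_V loopless] assms(5)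
    by auto
  have "u \<in> V" "v \<in> V" using ends_V[OF assms(4)] assms(5) by auto
  obtain a b e1 e2 where "degree_two_suppression V (E - {e}) ends u a b e1 e2 f"
    by (rule two_connected_degree_two_suppression[of V "E - {e}" ends u f])
      (use finite ends_V loopless assms(8,9) \<open>u \<in> V\<close> deg_u(2) in auto)
  then interpret degree_two_suppression V "E - {e}" ends u a b e1 e2 f .
  have Gu: "Gu_V V u = V - {u}" "Gu_E E ends u f = suppressed_E"
    "Gu_ends E ends e u f = suppressed_ends"
    unfolding Gu_V_def Gu_E_def suppressed_E_def Gu_ends_def suppressed_ends_def
      nbrs_minus_def suppressed_neighbours using assms(5) by auto
  have "real (card V) + real (n2 V E ends)
      = real (card (V - {u})) + real (n2 (V - {u}) suppressed_E suppressed_ends)"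
    using n2_suppressed n2_remove_edge[OF finite assms(4-6) \<open>u \<in> V\<close> \<open>v \<in> V\<close> deg_u(1) deg_v]
      card_Diff_singleton[OF \<open>u \<in> V\<close>] card_gt_0_iff[of V] finite(1) \<open>u \<in> V\<close> by auto
  moreover have "exc_out V E ends e = (INF F\<in>{F. even_cover V (E - {e}) ends F}. ereal (real (exc V ends F)))"
    unfolding exc_out_def even_cover_remove_edge ..
  moreover have "min (x + 2) (y + 1) - ereal c = min (x - ereal c + 2) (y - ereal c + 1)" for x y :: ereal and c
    by (cases x; cases y) (auto simp: min_def)
  ultimately show ?thesis
    unfolding delta_hat_def delta_def Gu INF_exc_even_covers by simp
qed

end
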